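(* For all integers $k \geq 4$ and $n \geq 2k+3$, \[\iota(B'_{n,C(k)}, \{C_{k+1}\}) = \left\lfloor \frac{2n}{2k+3} \right\rfloor.\]
   Context: Graphs are finite and simple; $C_{m}$ denotes the cycle on $m$ vertices. For $D \subseteq V(G)$, $N[D]$ is the union of closed neighbourhoods of vertices of $D$; $D$ is $\{C_{k+1}\}$-isolating if $G - N[D]$ contains no $(k+1)$-cycle as a subgraph, and $\iota(G,\{C_{k+1}\})$ is the minimum size of such a set. Define $\mathrm{mod}^*$ as the usual modulo operation except that $ba \ \mathrm{mod}^*\ a = a$ (instead of $0$). For $r \geq 1$, $r < m$, $C_m^r$ is the graph on $[m]$ with edges $\{i, (i+j) \ \mathrm{mod}^*\ m\}$ for $i \in [m]$, $j \in [r]$. For $k \geq 2$: if $k$ is even, $C(k) = C_{2k+2}^{k/2}$; if $k$ is odd, $C(k)$ has vertex set $[2k+2]$ and edge set $E(C_{2k+2}^{(k-1)/2}) \cup \{\{i, i+\frac{k+1}{2}\} : i \in [\frac{k+1}{2}] \cup ([k+1+\frac{k+1}{2}] \setminus [k+1])\}$. For $n \geq 2k+3$, let $q = \lfloor n/(2k+3) \rfloor$ and $n = q(2k+3)+r$ with $0 \le r \le 2k+2$. Let $u_1,\dots,u_{q+r}$ be new vertices. Let $R$ be the empty graph if $r \le 1$, and if $r \ge 2$ let $R$ have vertex set $\{u_{q+j} : j \in [r]\}$ and edge set $\{u_{q+r}u_{q+j} : j \in [r-1]\}$. Let $G_1,\dots,G_q$ be pairwise disjoint copies of $C(k)$, disjoint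 from the $u$'s, with $v_{i,1},\dots,v_{i,2k+2}$ the vertices of $G_i$ corresponding to $1,\dots,2k+2$. Let $t=\min\{1,r\}$. The graph $B_{n,C(k)}$ has vertex set $\{u_1,\dots,u_{q+r}\} \cup \bigcup_{i=1}^q V(G_i)$ and edge set $\{u_iv_{i,1} : i \in [q]\} \cup \{u_iu_{i+1} : i \in [q+t-1]\} \cup E(R) \cup \bigcup_{i=1}^q E(G_i)$. Finally $B'_{n,C(k)}$ is the graph with the same vertex set as $B_{n,C(k)}$ and edge set $E(B_{n,C(k)}) \cup \binom{V(R)}{2}$ (i.e. $V(R)$ is made into a clique). *)

theory Defs
  imports Main
begin

(* Simple graphs are given by a vertex set V and a set E of 2-element edges {a,b}. *)

definition closed_nbhd :: "'a set set \<Rightarrow> 'a set \<Rightarrow> 'a set" where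
  "closed_nbhd E D = D \<union> {v. \<exists>d\<in>D. {d, v} \<in> E}"

definition has_cycle :: "'a set \<Rightarrow> 'a set set \<Rightarrow> nat \<Rightarrow> bool" where
  "has_cycle V E m \<longleftrightarrow> 3 \<le> m \<and>
     (\<exists>f. inj_on f {..<m} \<and> f ` {..<m} \<subseteq> V \<and> (\<forall>i<m. {f i, f (Suc i mod m)} \<in> E))"

(* D is C_m-isolating in (V,E): G - N[D] (induced subgraph on V - N[D]) has no C_m *)
definition isolating :: "'a set \<Rightarrow> 'a set set \<Rightarrow> 'a set \<Rightarrow> nat \<Rightarrow> bool" where
  "isolating V E D m \<longleftrightarrow> D \<subseteq> V \<and> \<not> has_cycle (V - closed_nbhd E D) E m"

definition iota :: "'a set \<Rightarrow> 'a set set \<Rightarrow> nat \<Rightarrow> nat" where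
  "iota V E m = Min {card D | D. isolating V E D m}"

definition modstar :: "nat \<Rightarrow> nat \<Rightarrow> nat" where
  "modstar x m = (if x mod m = 0 then m else x mod m)"

definition circ_power_edges :: "nat \<Rightarrow> nat \<Rightarrow> nat set set" where
  "circ_power_edges m r = {{i, modstar (i + j) m} | i j. i \<in> {1..m} \<and> j \<in> {1..r}}"

definition Ck_edges :: "nat \<Rightarrow> nat set set" where
  "Ck_edges k = (if even k then circ_power_edges (2*k+2) (k div 2)
     else circ_power_edges (2*k+2) ((k - 1) div 2) \<union>
       {{i, i + (k+1) div 2} | i. i \<in> {1..(k+1) div 2} \<union> ({1..k+1+(k+1) div 2} - {1..k+1})})"

(* vertices: U i = u_i, W i j = v_{i,j} *)
datatype bvert = U nat | W nat nat

definition B_V :: "nat \<Rightarrow> nat \<Rightarrow> bvert set" where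
  "B_V n k = (let q = n div (2*k+3); r = n mod (2*k+3) in
     {U i | i. i \<in> {1..q+r}} \<union> {W i j | i j. i \<in> {1..q} \<and> j \<in> {1..2*k+2}})"

definition R_V :: "nat \<Rightarrow> nat \<Rightarrow> bvert set" where
  "R_V n k = (let q = n div (2*k+3); r = n mod (2*k+3) in
     if 2 \<le> r then {U (q+j) | j. j \<in> {1..r}} else {})"

definition R_E :: "nat \<Rightarrow> nat \<Rightarrow> bvert set set" where
  "R_E n k = (let q = n div (2*k+3); r = n mod (2*k+3) in
     if 2 \<le> r then {{U (q+r), U (q+j)} | j. j \<in> {1..r-1}} else {})"

definition B_E :: "nat \<Rightarrow> nat \<Rightarrow> bvert set set" where
  "B_E n k = (let q = n div (2*k+3); r = n mod (2*k+3); t = min 1 r in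
     {{U i, W i 1} | i. i \<in> {1..q}}
     \<union> {{U i, U (i+1)} | i. i \<in> {1..q+t-1}}
     \<union> R_E n k
     \<union> {{W i a, W i b} | i a b. i \<in> {1..q} \<and> {a, b} \<in> Ck_edges k})"

definition B'_E :: "nat \<Rightarrow> nat \<Rightarrow> bvert set set" where
  "B'_E n k = B_E n k \<union> {{a, b} | a b. a \<in> R_V n k \<and> b \<in> R_V n k \<and> a \<noteq> b}"

end

theory Submission
  imports Defs
begin

(* An isolating set D must contain two vertices of every block {u_i} \<union> V(G_i): a single vertex
   dominates inside G_i at most the closed neighbourhood N[j] of one vertex j of C(k) (u_i dominates
   only v_{i,1}), and the k+1 vertices of C(k) outside N[j] form an arc of the underlying cycle, which
   carries a (k+1)-cycle in zigzag order because vertices at distance at most 2 are adjacent.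
   If r >= k+2, D must also meet the clique R, whose vertices other than u_{q+1} have no neighbours
   outside R.  Conversely, u_i together with the antipode v_{i,k+2} of v_{i,1} in every copy, plus
   u_{q+r} when r >= k+2, leave only components with at most k vertices.  Hence the minimum is
   2q + [r >= k+2] = floor(2n/(2k+3)). *)

lemma has_cycleI:
  assumes "3 \<le> m" "inj_on f {..<m}" "f ` {..<m} \<subseteq> V"
    and "\<And>t. t < m \<Longrightarrow> {f t, f (Suc t mod m)} \<in> E"
  shows "has_cycle V E m"
  unfolding has_cycle_def using assms by blast

lemma has_cycle_hom:
  assumes "has_cycle V E m" "inj_on h V" "h ` V \<subseteq> V'"
    and "\<And>x y. x \<in> V \<Longrightarrow> y \<in> V \<Longrightarrow> {x, y} \<in> E \<Longrightarrow> {h x, h y} \<in> E'"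
  shows "has_cycle V' E' m"
proof -
  obtain f where f: "3 \<le> m" "inj_on f {..<m}" "f ` {..<m} \<subseteq> V"
    "\<And>t. t < m \<Longrightarrow> {f t, f (Suc t mod m)} \<in> E"
    using assms(1) unfolding has_cycle_def by blast
  show ?thesis
  proof (rule has_cycleI[where f = "h \<circ> f"])
    show "inj_on (h \<circ> f) {..<m}"
      using f(2) inj_on_subset[OF assms(2) f(3)] by (rule comp_inj_on)
    show "(h \<circ> f) ` {..<m} \<subseteq> V'" using f(3) assms(3) by auto
    fix t assume "t < m"
    moreover have "Suc t mod m < m" using f(1) by simp
    ultimately have "f t \<in> V" "f (Suc t mod m) \<in> V" using f(3) by auto
    then show "{(h \<circ> f) t, (h \<circ> f) (Suc t mod m)} \<in> E'"
      using f(4)[OF \<open>t < m\<close>] assms(4) by simp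
  qed (use f(1) in simp)
qed

lemma has_cycle_clique:
  assumes "3 \<le> m" "finite C" "m \<le> card C" "C \<subseteq> V"
    and "\<And>x y. x \<in> C \<Longrightarrow> y \<in> C \<Longrightarrow> x \<noteq> y \<Longrightarrow> {x, y} \<in> E"
  shows "has_cycle V E m"
proof -
  obtain f where f: "bij_betw f {..<card C} C"
    using ex_bij_betw_nat_finite[OF assms(2)] by (auto simp: atLeast0LessThan)
  have inj: "inj_on f {..<m}"
    using bij_betw_imp_inj_on[OF f] by (rule inj_on_subset) (use assms(3) in auto)
  have img: "f ` {..<m} \<subseteq> C"
    using bij_betw_imp_surj_on[OF f] assms(3) by auto
  show ?thesis
  proof (rule has_cycleI[OF assms(1) inj])
    show "f ` {..<m} \<subseteq> V" using img assms(4) by blast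
    fix t assume t: "t < m"
    have "Suc t mod m < m" "Suc t mod m \<noteq> t"
      using t assms(1) by (auto simp: mod_Suc)
    then show "{f t, f (Suc t mod m)} \<in> E"
      using t img inj assms(5) by (metis image_subset_iff inj_on_contraD lessThan_iff)
  qed
qed

lemma not_has_cycle_if_small_classes:
  fixes c :: "'a \<Rightarrow> 'b"
  assumes fin: "finite V"
    and edge: "\<And>x y. x \<in> V \<Longrightarrow> y \<in> V \<Longrightarrow> {x, y} \<in> E \<Longrightarrow> c x = c y"
    and small: "\<And>x. x \<in> V \<Longrightarrow> card {y \<in> V. c y = c x} < m"
  shows "\<not> has_cycle V E m"
proof
  assume "has_cycle V E m"
  then obtain f where f: "inj_on f {..<m}" "f ` {..<m} \<subseteq> V"
    "\<And>t. t < m \<Longrightarrow> {f t, f (Suc t mod m)} \<in> E" and m: "3 \<le> m"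
    unfolding has_cycle_def by blast
  have same: "c (f t) = c (f 0)" if "t < m" for t
    using that
  proof (induction t)
    case (Suc t)
    then have "{f t, f (Suc t)} \<in> E" using f(3)[of t] by simp
    moreover have "f t \<in> V" "f (Suc t) \<in> V" using Suc.prems f(2) by auto
    ultimately show ?case using Suc edge by (metis Suc_lessD)
  qed simp
  have "f ` {..<m} \<subseteq> {y \<in> V. c y = c (f 0)}" using f(2) same by auto
  then have "card (f ` {..<m}) \<le> card {y \<in> V. c y = c (f 0)}"
    by (rule card_mono[rotated]) (use fin in simp)
  then have "m \<le> card {y \<in> V. c y = c (f 0)}"
    using card_image[OF f(1)] by simp
  moreover have "f 0 \<in> V" using f(2) m by auto
  ultimately show False using small by (meson leD)
qed

lemma iota_eqI:
  assumes "finite V" "\<And>D. isolating V E D m \<Longrightarrow> v \<le> card D"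
    and "isolating V E D\<^sub>0 m" "card D\<^sub>0 = v"
  shows "iota V E m = v"
  unfolding iota_def
proof (rule Min_eqI)
  have "{card D | D. isolating V E D m} \<subseteq> card ` Pow V" by (auto simp: isolating_def)
  then show "finite {card D | D. isolating V E D m}"
    by (rule finite_subset) (use assms(1) in simp)
qed (use assms(2-4) in auto)

lemma two_mult_div_eq:
  fixes n m :: nat
  assumes "0 < m"
  shows "(2 * n) div m = 2 * (n div m) + (if m \<le> 2 * (n mod m) then 1 else 0)"
proof -
  have "2 * n = 2 * (n mod m) + 2 * (n div m) * m"
    using div_mult_mod_eq[of n m] by linarith
  then have "(2 * n) div m = (2 * (n mod m)) div m + 2 * (n div m)"
    using assms by simp
  moreover have "(2 * (n mod m)) div m = (if m \<le> 2 * (n mod m) then 1 else 0)"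
    using assms mod_less_divisor[OF assms, of n] by (auto simp: div_if le_div_geq)
  ultimately show ?thesis by simp
qed

section \<open>Circulant graphs and C(k)\<close>

lemma modstar_add_eq:
  assumes "1 \<le> i" "i \<le> m" "d < m"
  shows "modstar (i + d) m = (if i + d \<le> m then i + d else i + d - m)"
proof -
  consider "i + d < m" | "i + d = m" | "m < i + d" "i + d - m < m" using assms by linarith
  then show ?thesis
  proof cases
    case 3
    then have "(i + d) mod m = i + d - m" by (simp add: le_mod_geq)
    then show ?thesis using 3 by (simp add: modstar_def)
  qed (use assms in \<open>simp_all add: modstar_def\<close>)
qed

definition circ_adj :: "nat \<Rightarrow> nat \<Rightarrow> nat \<Rightarrow> nat \<Rightarrow> bool" where
  "circ_adj m r a b \<longleftrightarrow> 1 \<le> a \<and> a \<le> m \<and> 1 \<le> b \<and> b \<le> m \<and>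
     ((a < b \<and> (b - a \<le> r \<or> a + m - b \<le> r)) \<or> (b < a \<and> (a - b \<le> r \<or> b + m - a \<le> r)))"

lemma circ_adj_sym: "circ_adj m r a b \<Longrightarrow> circ_adj m r b a"
  unfolding circ_adj_def by auto

lemma mem_circ_power_edges_iff:
  assumes "r < m"
  shows "{a, b} \<in> circ_power_edges m r \<longleftrightarrow> circ_adj m r a b"
proof
  assume "{a, b} \<in> circ_power_edges m r"
  then obtain i d where id: "{a, b} = {i, modstar (i + d) m}" "1 \<le> i" "i \<le> m" "1 \<le> d" "d \<le> r"
    unfolding circ_power_edges_def by auto
  then have "circ_adj m r i (modstar (i + d) m)"
    using assms by (auto simp: modstar_add_eq circ_adj_def)
  moreover have "(a = i \<and> b = modstar (i + d) m) \<or> (a = modstar (i + d) m \<and> b = i)"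
    using id(1) by (simp add: doubleton_eq_iff)
  ultimately show "circ_adj m r a b"
    using circ_adj_sym by blast
next
  have edge: "{i, j} \<in> circ_power_edges m r"
    if "1 \<le> i" "i \<le> m" "1 \<le> d" "d \<le> r" "j = (if i + d \<le> m then i + d else i + d - m)" for i j d
  proof -
    have "modstar (i + d) m = j" using that assms by (simp add: modstar_add_eq)
    moreover have "i \<in> {1..m}" "d \<in> {1..r}" using that by auto
    ultimately show ?thesis unfolding circ_power_edges_def by blast
  qed
  assume adj: "circ_adj m r a b"
  then consider "a < b" "b - a \<le> r" | "a < b" "a + m - b \<le> r" | "b < a" "a - b \<le> r"
    | "b < a" "b + m - a \<le> r"
    unfolding circ_adj_def by auto
  then show "{a, b} \<in> circ_power_edges m r"
  proof cases
    case 1 then show ?thesis using adj by (intro edge[of a "b - a"]) (auto simp: circ_adj_def)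
  next
    case 2 then show ?thesis using adj edge[of b "a + m - b" a] by (auto simp: circ_adj_def insert_commute)
  next
    case 3 then show ?thesis using adj edge[of b "a - b" a] by (auto simp: circ_adj_def insert_commute)
  next
    case 4 then show ?thesis using adj by (intro edge[of a "b + m - a"]) (auto simp: circ_adj_def)
  qed
qed

definition chord_adj :: "nat \<Rightarrow> nat \<Rightarrow> nat \<Rightarrow> bool" where
  "chord_adj k a b \<longleftrightarrow> (let h = (k + 1) div 2 in
     (b = a + h \<and> (1 \<le> a \<and> a \<le> h \<or> k + 2 \<le> a \<and> a \<le> k + 1 + h)) \<or>
     (a = b + h \<and> (1 \<le> b \<and> b \<le> h \<or> k + 2 \<le> b \<and> b \<le> k + 1 + h)))"

lemma odd_half_eq: "odd (k::nat) \<Longrightarrow> (k - 1) div 2 = k div 2"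
  by presburger

lemma circ_power_edges_subset_Ck_edges: "circ_power_edges (2 * k + 2) (k div 2) \<subseteq> Ck_edges k"
proof (cases "even k")
  case False
  show ?thesis unfolding Ck_edges_def if_not_P[OF False] odd_half_eq[OF False] by (rule Un_upper1)
qed (simp add: Ck_edges_def)

lemma mem_Ck_edges_iff:
  "{a, b} \<in> Ck_edges k \<longleftrightarrow> circ_adj (2 * k + 2) (k div 2) a b \<or> (odd k \<and> chord_adj k a b)"
proof -
  define h where "h = (k + 1) div 2"
  have "{a, b} \<in> {{i, i + h} | i. i \<in> {1..h} \<union> ({1..k + 1 + h} - {1..k + 1})}
     \<longleftrightarrow> (\<exists>i. ((a = i \<and> b = i + h) \<or> (a = i + h \<and> b = i)) \<and> i \<in> {1..h} \<union> ({1..k + 1 + h} - {1..k + 1}))"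
    by (simp only: mem_Collect_eq doubleton_eq_iff)
  also have "\<dots> \<longleftrightarrow> chord_adj k a b"
    unfolding chord_adj_def Let_def h_def[symmetric] by auto
  finally have chord: "{a, b} \<in> {{i, i + h} | i. i \<in> {1..h} \<union> ({1..k + 1 + h} - {1..k + 1})}
     \<longleftrightarrow> chord_adj k a b" .
  have circ: "{a, b} \<in> circ_power_edges (2 * k + 2) (k div 2) \<longleftrightarrow> circ_adj (2 * k + 2) (k div 2) a b"
    by (rule mem_circ_power_edges_iff) simp
  show ?thesis
  proof (cases "even k")
    case False
    then show ?thesis using chord circ unfolding Ck_edges_def h_def[symmetric] odd_half_eq[OF False]
      by (simp only: if_False Un_iff simp_thms)
  qed (use circ in \<open>simp add: Ck_edges_def\<close>)
qed

definition cyc_shift :: "nat \<Rightarrow> nat \<Rightarrow> nat \<Rightarrow> nat" where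
  "cyc_shift m s x = (if s + x \<le> m then s + x else s + x - m)"

lemma cyc_shift_in_range: "s \<in> {1..m} \<Longrightarrow> x < m \<Longrightarrow> cyc_shift m s x \<in> {1..m}"
  unfolding cyc_shift_def by auto

lemma inj_on_cyc_shift: "s \<in> {1..m} \<Longrightarrow> inj_on (cyc_shift m s) {..<m}"
  unfolding cyc_shift_def inj_on_def by (auto split: if_splits)

lemma circ_adj_cyc_shift:
  assumes "2 \<le> r" "r < m" "s \<in> {1..m}" "x < m" "y < m" "y = x + 1 \<or> y = x + 2"
  shows "circ_adj m r (cyc_shift m s x) (cyc_shift m s y)"
  using assms unfolding cyc_shift_def circ_adj_def by (auto split: if_splits)

(* Listing 0, 2, 4, ... upwards and then the remaining offsets of {0..k} downwards visits
   every offset once, in steps of at most 2, also when wrapping around. *)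

definition zigzag :: "nat \<Rightarrow> nat \<Rightarrow> nat" where
  "zigzag k t = (if t \<le> k div 2 then 2 * t else 2 * k + 1 - 2 * t)"

lemma zigzag_le: "t \<le> k \<Longrightarrow> zigzag k t \<le> k"
  unfolding zigzag_def by auto

lemma inj_on_zigzag: "inj_on (zigzag k) {..k}"
  unfolding zigzag_def inj_on_def by (auto split: if_splits) presburger+

lemma zigzag_step:
  assumes "2 \<le> k" "t \<le> k"
  defines "u \<equiv> zigzag k t" and "v \<equiv> zigzag k (Suc t mod (k + 1))"
  shows "v = u + 1 \<or> v = u + 2 \<or> u = v + 1 \<or> u = v + 2"
proof -
  have "2 * (k div 2) = k \<or> 2 * (k div 2) + 1 = k" by presburger
  then show ?thesis using assms unfolding zigzag_def by (auto simp: mod_Suc split: if_splits)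
qed

lemma has_cycle_circ_power_window:
  assumes "2 \<le> r" "r < m" "2 \<le> k" "k < m" "s \<in> {1..m}"
  shows "has_cycle (cyc_shift m s ` {..k}) (circ_power_edges m r) (k + 1)"
proof (rule has_cycleI[where f = "\<lambda>t. cyc_shift m s (zigzag k t)"])
  have zz: "zigzag k ` {..k} \<subseteq> {..<m}" using zigzag_le assms(4) by fastforce
  show "inj_on (\<lambda>t. cyc_shift m s (zigzag k t)) {..<k + 1}"
    using comp_inj_on[OF inj_on_zigzag inj_on_subset[OF inj_on_cyc_shift[OF assms(5)] zz]]
    by (simp add: lessThan_Suc_atMost comp_def)
  show "(\<lambda>t. cyc_shift m s (zigzag k t)) ` {..<k + 1} \<subseteq> cyc_shift m s ` {..k}"
    using zigzag_le by auto
  fix t assume "t < k + 1"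
  then have t: "t \<le> k" "Suc t mod (k + 1) \<le> k" by auto
  let ?u = "zigzag k t" and ?v = "zigzag k (Suc t mod (k + 1))"
  have "?u < m" "?v < m" using zigzag_le[OF t(1)] zigzag_le[OF t(2)] assms(4) by auto
  then have "circ_adj m r (cyc_shift m s ?u) (cyc_shift m s ?v)"
    using zigzag_step[OF assms(3) t(1)] circ_adj_cyc_shift[OF assms(1,2,5)] circ_adj_sym by blast
  then show "{cyc_shift m s ?u, cyc_shift m s ?v} \<in> circ_power_edges m r"
    using mem_circ_power_edges_iff[OF assms(2)] by blast
qed (use assms(3) in simp)

(* With p = k div 2, the closed neighbourhood of j in C(k) is the arc of radius p around j plus,
   for odd k, one chord endpoint at distance p+1 whose side depends on the range of j; the window
   of the remaining k+1 vertices starts right after this set. *)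

lemma far_window_even:
  assumes "2 \<le> p" "m = 4 * p + 2" "j \<in> {1..m}" "x \<le> 2 * p" "s = cyc_shift m j (p + 1)"
  shows "cyc_shift m s x \<noteq> j \<and> \<not> circ_adj m p j (cyc_shift m s x)"
  using assms unfolding cyc_shift_def circ_adj_def by (auto split: if_splits)

lemma far_window_odd:
  assumes "2 \<le> p" "m = 4 * p + 4" "k = 2 * p + 1" "j \<in> {1..m}" "x \<le> k"
    and "s = (if j \<le> p + 1 \<or> (k + 2 \<le> j \<and> j \<le> k + 2 + p)
      then cyc_shift m j (p + 2) else cyc_shift m j (p + 1))"
  shows "cyc_shift m s x \<noteq> j \<and> \<not> circ_adj m p j (cyc_shift m s x) \<and> \<not> chord_adj k j (cyc_shift m s x)"
proof -
  have "(k + 1) div 2 = p + 1" using assms(3) by simp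
  then show ?thesis
    using assms unfolding cyc_shift_def circ_adj_def chord_adj_def Let_def by (auto split: if_splits)
qed

lemma Ck_window_outside_closed_nbhd:
  assumes "4 \<le> k" "j \<in> {1..2 * k + 2}"
  obtains s where "s \<in> {1..2 * k + 2}"
    "cyc_shift (2 * k + 2) s ` {..k} \<inter> closed_nbhd (Ck_edges k) {j} = {}"
proof -
  define m where "m = 2 * k + 2"
  define p where "p = k div 2"
  have "2 \<le> p" using assms(1) by (simp add: p_def)
  have "\<exists>s \<in> {1..m}. \<forall>x \<le> k. cyc_shift m s x \<noteq> j \<and> \<not> circ_adj m p j (cyc_shift m s x)
      \<and> \<not> (odd k \<and> chord_adj k j (cyc_shift m s x))"
  proof (cases "even k")
    case True
    then have "m = 4 * p + 2" "k = 2 * p" by (auto simp: m_def p_def)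
    moreover have "cyc_shift m j (p + 1) \<in> {1..m}"
      using assms(2) by (intro cyc_shift_in_range) (auto simp: m_def p_def)
    ultimately show ?thesis
      using True far_window_even[OF \<open>2 \<le> p\<close> _ assms(2)[folded m_def]]
      by (intro bexI[of _ "cyc_shift m j (p + 1)"]) auto
  next
    case False
    then have mk: "m = 4 * p + 4" "k = 2 * p + 1" by (auto simp: m_def p_def elim: oddE)
    define s where "s = (if j \<le> p + 1 \<or> (k + 2 \<le> j \<and> j \<le> k + 2 + p)
      then cyc_shift m j (p + 2) else cyc_shift m j (p + 1))"
    have "cyc_shift m j d \<in> {1..m}" if "d \<le> p + 2" for d
      using assms that by (intro cyc_shift_in_range) (auto simp: m_def p_def)
    then have "s \<in> {1..m}" unfolding s_def by simp
    then show ?thesis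
      using far_window_odd[OF \<open>2 \<le> p\<close> mk assms(2)[folded m_def] _ s_def] by blast
  qed
  then obtain s where "s \<in> {1..m}" and far: "\<forall>x \<le> k. cyc_shift m s x \<noteq> j \<and>
      \<not> circ_adj m p j (cyc_shift m s x) \<and> \<not> (odd k \<and> chord_adj k j (cyc_shift m s x))"
    by blast
  show thesis
  proof (rule that)
    show "s \<in> {1..2 * k + 2}" using \<open>s \<in> {1..m}\<close> by (simp add: m_def)
    show "cyc_shift (2 * k + 2) s ` {..k} \<inter> closed_nbhd (Ck_edges k) {j} = {}"
      using far unfolding closed_nbhd_def mem_Ck_edges_iff m_def p_def by auto
  qed
qed

lemma Ck_has_cycle_outside_closed_nbhd:
  assumes "4 \<le> k" "j \<in> {1..2 * k + 2}"
  shows "has_cycle ({1..2 * k + 2} - closed_nbhd (Ck_edges k) {j}) (Ck_edges k) (k + 1)"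
proof -
  obtain s where s: "s \<in> {1..2 * k + 2}"
    and disj: "cyc_shift (2 * k + 2) s ` {..k} \<inter> closed_nbhd (Ck_edges k) {j} = {}"
    using Ck_window_outside_closed_nbhd[OF assms] .
  have "has_cycle (cyc_shift (2 * k + 2) s ` {..k}) (circ_power_edges (2 * k + 2) (k div 2)) (k + 1)"
    using assms(1) s by (intro has_cycle_circ_power_window) auto
  then show ?thesis
  proof (rule has_cycle_hom[where h = id])
    show "id ` cyc_shift (2 * k + 2) s ` {..k} \<subseteq> {1..2 * k + 2} - closed_nbhd (Ck_edges k) {j}"
      using disj cyc_shift_in_range[OF s] by auto
  qed (use circ_power_edges_subset_Ck_edges in auto)
qed

section \<open>The graph B'\<close>

lemma U_mem_B_V_iff: "U i \<in> B_V n k \<longleftrightarrow> i \<in> {1..n div (2 * k + 3) + n mod (2 * k + 3)}"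
  unfolding B_V_def Let_def by auto

lemma W_mem_B_V_iff: "W i j \<in> B_V n k \<longleftrightarrow> i \<in> {1..n div (2 * k + 3)} \<and> j \<in> {1..2 * k + 2}"
  unfolding B_V_def Let_def by auto

lemma finite_B_V: "finite (B_V n k)"
proof (rule finite_subset)
  show "B_V n k \<subseteq> U ` {1..n div (2 * k + 3) + n mod (2 * k + 3)}
      \<union> case_prod W ` ({1..n div (2 * k + 3)} \<times> {1..2 * k + 2})"
    unfolding B_V_def Let_def by auto
qed simp

lemma mem_R_V_iff:
  "x \<in> R_V n k \<longleftrightarrow> 2 \<le> n mod (2 * k + 3) \<and>
     (\<exists>j \<in> {1..n mod (2 * k + 3)}. x = U (n div (2 * k + 3) + j))"
  unfolding R_V_def Let_def by auto

lemma mem_B'_E_iff: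
  assumes "q = n div (2 * k + 3)" "r = n mod (2 * k + 3)"
  shows "e \<in> B'_E n k \<longleftrightarrow>
    (\<exists>i \<in> {1..q}. e = {U i, W i 1}) \<or>
    (\<exists>i \<in> {1..q + min 1 r - 1}. e = {U i, U (i + 1)}) \<or>
    (2 \<le> r \<and> (\<exists>j \<in> {1..r - 1}. e = {U (q + r), U (q + j)})) \<or>
    (\<exists>i \<in> {1..q}. \<exists>a b. e = {W i a, W i b} \<and> {a, b} \<in> Ck_edges k) \<or>
    (\<exists>a b. e = {a, b} \<and> a \<in> R_V n k \<and> b \<in> R_V n k \<and> a \<noteq> b)"
proof -
  have "e \<in> R_E n k \<longleftrightarrow> 2 \<le> r \<and> (\<exists>j \<in> {1..r - 1}. e = {U (q + r), U (q + j)})"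
    unfolding R_E_def Let_def assms[symmetric] by auto
  then show ?thesis
    unfolding B'_E_def B_E_def Let_def assms[symmetric] Un_iff by blast
qed

lemma W_edge_in_B'_E:
  "i \<in> {1..n div (2 * k + 3)} \<Longrightarrow> {a, b} \<in> Ck_edges k \<Longrightarrow> {W i a, W i b} \<in> B'_E n k"
  unfolding mem_B'_E_iff[OF refl refl] by (rule disjI2, rule disjI2, rule disjI2, rule disjI1) blast

lemma U_W_edge_in_B'_E: "i \<in> {1..n div (2 * k + 3)} \<Longrightarrow> {U i, W i 1} \<in> B'_E n k"
  unfolding mem_B'_E_iff[OF refl refl] by (rule disjI1) blast

lemma R_edge_in_B'_E: "a \<in> R_V n k \<Longrightarrow> b \<in> R_V n k \<Longrightarrow> a \<noteq> b \<Longrightarrow> {a, b} \<in> B'_E n k"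
  unfolding B'_E_def by blast

lemma path_end_edge_in_B'_E:
  assumes "1 \<le> n div (2 * k + 3)" "1 \<le> n mod (2 * k + 3)"
  shows "{U (n div (2 * k + 3)), U (n div (2 * k + 3) + 1)} \<in> B'_E n k"
  using assms unfolding mem_B'_E_iff[OF refl refl]
  by (intro disjI2 disjI1 bexI[of _ "n div (2 * k + 3)"]) auto

lemma B'_E_W_neighbour:
  assumes "{d, W i x} \<in> B'_E n k"
  shows "d = U i \<and> x = 1 \<or> (\<exists>y. d = W i y \<and> {y, x} \<in> Ck_edges k)"
  using assms unfolding mem_B'_E_iff[OF refl refl]
proof (elim disjE bexE exE conjE)
  fix i' a b assume "{d, W i x} = {W i' a, W i' b}" "{a, b} \<in> Ck_edges k"
  then show ?thesis by (auto simp: doubleton_eq_iff insert_commute)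
next
  fix a b assume "{d, W i x} = {a, b}" "a \<in> R_V n k" "b \<in> R_V n k"
  then show ?thesis by (auto simp: doubleton_eq_iff mem_R_V_iff)
qed (simp_all add: doubleton_eq_iff)

lemma W_mem_closed_nbhd_B'_E:
  assumes "W i x \<in> closed_nbhd (B'_E n k) D"
  shows "W i x \<in> D \<or> U i \<in> D \<and> x = 1 \<or> (\<exists>y. W i y \<in> D \<and> {y, x} \<in> Ck_edges k)"
  using assms B'_E_W_neighbour unfolding closed_nbhd_def by blast

lemma B'_E_high_U_neighbour:
  assumes "{d, U (n div (2 * k + 3) + j)} \<in> B'_E n k" "2 \<le> j"
  shows "d \<in> R_V n k"
  using assms(1) unfolding mem_B'_E_iff[OF refl refl]
proof (elim disjE bexE exE conjE)
  fix i assume "{d, U (n div (2 * k + 3) + j)} = {U i, U (i + 1)}"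
    "i \<in> {1..n div (2 * k + 3) + min 1 (n mod (2 * k + 3)) - 1}"
  then show ?thesis using assms(2) by (auto simp: doubleton_eq_iff)
next
  fix j' assume "{d, U (n div (2 * k + 3) + j)} =
      {U (n div (2 * k + 3) + n mod (2 * k + 3)), U (n div (2 * k + 3) + j')}"
    "2 \<le> n mod (2 * k + 3)" "j' \<in> {1..n mod (2 * k + 3) - 1}"
  then show ?thesis by (auto simp: doubleton_eq_iff mem_R_V_iff)
next
  fix a b assume "{d, U (n div (2 * k + 3) + j)} = {a, b}" "a \<in> R_V n k" "b \<in> R_V n k"
  then show ?thesis by (auto simp: doubleton_eq_iff)
qed (use assms(2) in \<open>auto simp: doubleton_eq_iff\<close>)

fun part :: "bvert \<Rightarrow> nat option" where
  "part (U _) = None"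
| "part (W i _) = Some i"

lemma B'_E_part_eq:
  assumes "{x, y} \<in> B'_E n k" "x \<notin> U ` {1..n div (2 * k + 3)}" "y \<notin> U ` {1..n div (2 * k + 3)}"
  shows "part x = part y"
  using assms(1) unfolding mem_B'_E_iff[OF refl refl]
proof (elim disjE bexE exE conjE)
  fix i assume "{x, y} = {U i, W i 1}" "i \<in> {1..n div (2 * k + 3)}"
  then show ?thesis using assms(2,3) by (auto simp: doubleton_eq_iff)
next
  fix a b assume "{x, y} = {a, b}" "a \<in> R_V n k" "b \<in> R_V n k"
  then show ?thesis by (auto simp: doubleton_eq_iff mem_R_V_iff)
qed (auto simp: doubleton_eq_iff)

section \<open>Lower bound\<close>

definition block :: "nat \<Rightarrow> bvert set" where
  "block i = insert (U i) (range (W i))"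

lemma copy_closed_nbhd_single:
  assumes "D \<subseteq> B_V n k" "card (D \<inter> block i) \<le> 1"
  obtains j where "j \<in> {1..2 * k + 2}"
    "\<And>x. W i x \<in> closed_nbhd (B'_E n k) D \<Longrightarrow> x \<in> closed_nbhd (Ck_edges k) {j}"
proof -
  have "finite (D \<inter> block i)" using assms(1) finite_B_V by (meson finite_Int finite_subset)
  then have one: "a = b" if "a \<in> D \<inter> block i" "b \<in> D \<inter> block i" for a b
    using assms(2) that card_le_Suc0_iff_eq[OF \<open>finite (D \<inter> block i)\<close>] by simp
  show thesis
  proof (cases "\<exists>y. W i y \<in> D")
    case True
    then obtain y where y: "W i y \<in> D" by blast
    have "x \<in> closed_nbhd (Ck_edges k) {y}" if "W i x \<in> closed_nbhd (B'_E n k) D" for x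
      using W_mem_closed_nbhd_B'_E[OF that] one y by (auto simp: block_def closed_nbhd_def)
    moreover have "y \<in> {1..2 * k + 2}" using y assms(1) W_mem_B_V_iff by blast
    ultimately show thesis using that by blast
  next
    case False
    have "x \<in> closed_nbhd (Ck_edges k) {1}" if "W i x \<in> closed_nbhd (B'_E n k) D" for x
      using W_mem_closed_nbhd_B'_E[OF that] False by (auto simp: closed_nbhd_def)
    moreover have "1 \<in> {1..2 * k + 2}" by simp
    ultimately show thesis using that by blast
  qed
qed

lemma two_le_card_block:
  assumes "4 \<le> k" "isolating (B_V n k) (B'_E n k) D (k + 1)" "i \<in> {1..n div (2 * k + 3)}"
  shows "2 \<le> card (D \<inter> block i)"
proof (rule ccontr)
  assume "\<not> 2 \<le> card (D \<inter> block i)"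
  then have "card (D \<inter> block i) \<le> 1" by simp
  moreover have "D \<subseteq> B_V n k" using assms(2) by (simp add: isolating_def)
  ultimately obtain j where j: "j \<in> {1..2 * k + 2}"
    and dom: "\<And>x. W i x \<in> closed_nbhd (B'_E n k) D \<Longrightarrow> x \<in> closed_nbhd (Ck_edges k) {j}"
    using copy_closed_nbhd_single by metis
  have "has_cycle ({1..2 * k + 2} - closed_nbhd (Ck_edges k) {j}) (Ck_edges k) (k + 1)"
    using Ck_has_cycle_outside_closed_nbhd[OF assms(1) j] .
  then have "has_cycle (B_V n k - closed_nbhd (B'_E n k) D) (B'_E n k) (k + 1)"
  proof (rule has_cycle_hom[where h = "W i"])
    show "W i ` ({1..2 * k + 2} - closed_nbhd (Ck_edges k) {j}) \<subseteq> B_V n k - closed_nbhd (B'_E n k) D"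
    proof
      fix w assume "w \<in> W i ` ({1..2 * k + 2} - closed_nbhd (Ck_edges k) {j})"
      then obtain x where "w = W i x" "x \<in> {1..2 * k + 2}" "x \<notin> closed_nbhd (Ck_edges k) {j}"
        by blast
      then show "w \<in> B_V n k - closed_nbhd (B'_E n k) D"
        using dom assms(3) by (auto simp: W_mem_B_V_iff)
    qed
  qed (simp_all add: inj_on_def W_edge_in_B'_E[OF assms(3)])
  then show False using assms(2) by (simp add: isolating_def)
qed

lemma R_V_meets_isolating:
  assumes "2 \<le> k" "isolating (B_V n k) (B'_E n k) D (k + 1)" "k + 2 \<le> n mod (2 * k + 3)"
  shows "D \<inter> R_V n k \<noteq> {}"
proof
  assume disj: "D \<inter> R_V n k = {}"
  define q where "q = n div (2 * k + 3)"
  define r where "r = n mod (2 * k + 3)"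
  define C where "C = (\<lambda>j. U (q + j)) ` {2..r}"
  have CR: "C \<subseteq> R_V n k" using assms(3) by (auto simp: C_def q_def r_def mem_R_V_iff)
  have "C \<inter> closed_nbhd (B'_E n k) D = {}"
  proof -
    have "d \<in> R_V n k" if "d \<in> D" "{d, U (q + j)} \<in> B'_E n k" "j \<in> {2..r}" for d j
      using B'_E_high_U_neighbour[of d n k j] that by (simp add: q_def)
    then show ?thesis using disj CR unfolding C_def closed_nbhd_def by blast
  qed
  moreover have "C \<subseteq> B_V n k" by (auto simp: C_def q_def r_def U_mem_B_V_iff)
  moreover have "card C = r - 1" by (simp add: C_def card_image inj_on_def)
  moreover have "{x, y} \<in> B'_E n k" if "x \<in> C" "y \<in> C" "x \<noteq> y" for x y
    using CR that R_edge_in_B'_E by blast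
  ultimately have "has_cycle (B_V n k - closed_nbhd (B'_E n k) D) (B'_E n k) (k + 1)"
    using assms(1,3) by (intro has_cycle_clique[of _ C]) (auto simp: C_def r_def)
  then show False using assms(2) by (simp add: isolating_def)
qed

lemma card_isolating_lower_bound:
  assumes "4 \<le> k" "isolating (B_V n k) (B'_E n k) D (k + 1)"
  shows "2 * (n div (2 * k + 3)) + (if k + 2 \<le> n mod (2 * k + 3) then 1 else 0) \<le> card D"
proof -
  define q where "q = n div (2 * k + 3)"
  define B where "B = (\<Union>i \<in> {1..q}. D \<inter> block i)"
  have "finite D" using assms(2) finite_B_V by (auto simp: isolating_def intro: finite_subset)
  have "card B = (\<Sum>i \<in> {1..q}. card (D \<inter> block i))"
    unfolding B_def using \<open>finite D\<close> by (intro card_UN_disjoint) (auto simp: block_def)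
  also have "\<dots> \<ge> 2 * q"
    using sum_bounded_below[of "{1..q}" 2 "\<lambda>i. card (D \<inter> block i)"]
      two_le_card_block[OF assms] by (simp add: q_def mult.commute)
  finally have "2 * q \<le> card B" .
  moreover have "(if k + 2 \<le> n mod (2 * k + 3) then 1 else 0) \<le> card (D \<inter> R_V n k)"
    using R_V_meets_isolating[OF _ assms(2)] assms(1) \<open>finite D\<close> by (simp add: card_gt_0_iff Suc_le_eq)
  moreover have "card B + card (D \<inter> R_V n k) \<le> card D"
  proof -
    have "B \<inter> (D \<inter> R_V n k) = {}" by (auto simp: B_def block_def mem_R_V_iff q_def)
    then show ?thesis
      using \<open>finite D\<close> by (subst card_Un_disjoint[symmetric]) (auto simp: B_def intro: card_mono)
  qed
  ultimately show ?thesis unfolding q_def by linarith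
qed

section \<open>Upper bound\<close>

lemma card_Ck_outside_antipodal_nbhd:
  assumes "2 \<le> k"
  shows "card ({1..2 * k + 2} - insert 1 (closed_nbhd (Ck_edges k) {k + 2})) \<le> k"
proof -
  define p where "p = k div 2"
  define T where "T = {2..k + 1 - p} \<union> {k + 3 + p + k mod 2..2 * k + 2}"
  have kp: "k = 2 * p + k mod 2" by (simp add: p_def)
  have "{1..2 * k + 2} - insert 1 (closed_nbhd (Ck_edges k) {k + 2}) \<subseteq> T"
  proof
    fix x assume x: "x \<in> {1..2 * k + 2} - insert 1 (closed_nbhd (Ck_edges k) {k + 2})"
    show "x \<in> T"
    proof (rule ccontr)
      assume "x \<notin> T"
      have "circ_adj (2 * k + 2) p (k + 2) x \<or> (odd k \<and> chord_adj k (k + 2) x)"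
      proof (cases "x \<le> k + 2 + p")
        case True
        then show ?thesis using x \<open>x \<notin> T\<close> by (auto simp: circ_adj_def T_def closed_nbhd_def)
      next
        case False
        then have "odd k" "x = k + 3 + p" using x \<open>x \<notin> T\<close> kp by (auto simp: T_def)
        moreover have "(k + 1) div 2 = p + 1" using \<open>odd k\<close> kp by presburger
        ultimately show ?thesis by (simp add: chord_adj_def)
      qed
      then show False using x by (simp add: mem_Ck_edges_iff closed_nbhd_def p_def)
    qed
  qed
  moreover have "card T = k"
  proof -
    have "card T = card {2..k + 1 - p} + card {k + 3 + p + k mod 2..2 * k + 2}"
      unfolding T_def by (rule card_Un_disjoint) auto
    also have "\<dots> = k" using kp assms by simp
    finally show ?thesis .
  qed
  ultimately show ?thesis by (metis card_mono finite_atLeastAtMost T_def finite_Un)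
qed

definition B_isolator :: "nat \<Rightarrow> nat \<Rightarrow> bvert set" where
  "B_isolator n k = (let q = n div (2 * k + 3); r = n mod (2 * k + 3) in
     U ` {1..q} \<union> (\<lambda>i. W i (k + 2)) ` {1..q} \<union> (if k + 2 \<le> r then {U (q + r)} else {}))"

lemma B_isolator_subset: "B_isolator n k \<subseteq> B_V n k"
  unfolding B_isolator_def Let_def by (auto simp: U_mem_B_V_iff W_mem_B_V_iff)

lemma card_B_isolator:
  "card (B_isolator n k) = 2 * (n div (2 * k + 3)) + (if k + 2 \<le> n mod (2 * k + 3) then 1 else 0)"
proof -
  define q where "q = n div (2 * k + 3)"
  have "card (U ` {1..q} \<union> (\<lambda>i. W i (k + 2)) ` {1..q}) = 2 * q"
    by (subst card_Un_disjoint) (auto simp: card_image inj_on_def)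
  then show ?thesis
    unfolding B_isolator_def Let_def q_def[symmetric] by (subst card_Un_disjoint) auto
qed

lemma U_outside_closed_nbhd_B_isolator:
  assumes "2 * k + 3 \<le> n" "U a \<in> B_V n k - closed_nbhd (B'_E n k) (B_isolator n k)"
  shows "a \<in> {n div (2 * k + 3) + 2..n div (2 * k + 3) + n mod (2 * k + 3)} \<and> n mod (2 * k + 3) \<le> k + 1"
proof -
  define q where "q = n div (2 * k + 3)"
  define r where "r = n mod (2 * k + 3)"
  have q: "1 \<le> q" using div_le_mono[OF assms(1), of "2 * k + 3"] by (simp add: q_def)
  have a: "1 \<le> a" "a \<le> q + r" using assms(2) by (auto simp: U_mem_B_V_iff q_def r_def)
  have far: "U a \<notin> B_isolator n k" "\<And>d. d \<in> B_isolator n k \<Longrightarrow> {d, U a} \<notin> B'_E n k"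
    using assms(2) by (auto simp: closed_nbhd_def)
  have "q < a" using far(1) a(1) by (auto simp: B_isolator_def Let_def q_def)
  moreover have "a \<noteq> q + 1"
  proof
    assume "a = q + 1"
    then have "{U q, U a} \<in> B'_E n k" using q a(2) path_end_edge_in_B'_E by (simp add: q_def r_def)
    moreover have "U q \<in> B_isolator n k" using q by (simp add: B_isolator_def Let_def q_def)
    ultimately show False using far(2) by blast
  qed
  moreover have "r \<le> k + 1"
  proof (rule ccontr)
    assume "\<not> r \<le> k + 1"
    then have top: "U (q + r) \<in> B_isolator n k" by (simp add: B_isolator_def Let_def q_def r_def)
    then have "a \<noteq> q + r" using far(1) by blast
    moreover have "U b \<in> R_V n k" if "q < b" "b \<le> q + r" for b
      using that \<open>\<not> r \<le> k + 1\<close> unfolding mem_R_V_iff q_def[symmetric] r_def[symmetric]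
      by (intro conjI bexI[of _ "b - q"]) auto
    ultimately have "{U (q + r), U a} \<in> B'_E n k"
      using \<open>q < a\<close> a(2) by (intro R_edge_in_B'_E) auto
    then show False using far(2) top by blast
  qed
  ultimately show ?thesis using a by (simp add: q_def r_def)
qed

lemma W_outside_closed_nbhd_B_isolator:
  assumes "W i x \<in> B_V n k - closed_nbhd (B'_E n k) (B_isolator n k)"
  shows "x \<in> {1..2 * k + 2} - insert 1 (closed_nbhd (Ck_edges k) {k + 2})"
proof -
  have i: "i \<in> {1..n div (2 * k + 3)}" and x: "x \<in> {1..2 * k + 2}"
    using assms by (auto simp: W_mem_B_V_iff)
  then have "U i \<in> B_isolator n k" "W i (k + 2) \<in> B_isolator n k"
    by (auto simp: B_isolator_def Let_def)
  moreover have "{U i, W i 1} \<in> B'_E n k" using i by (rule U_W_edge_in_B'_E)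
  moreover have "{W i (k + 2), W i x} \<in> B'_E n k" if "{k + 2, x} \<in> Ck_edges k"
    using i that by (rule W_edge_in_B'_E)
  ultimately show ?thesis using assms x by (auto simp: closed_nbhd_def)
qed

lemma card_U_part_outside_closed_nbhd_B_isolator:
  assumes "2 * k + 3 \<le> n"
  shows "card {y \<in> B_V n k - closed_nbhd (B'_E n k) (B_isolator n k). part y = None} \<le> k"
    (is "card ?S \<le> k")
proof (cases "?S = {}")
  case True
  then show ?thesis by (metis card.empty le0)
next
  case False
  define q where "q = n div (2 * k + 3)"
  define r where "r = n mod (2 * k + 3)"
  have U_part: "\<exists>a. y = U a" if "part y = None" for y using that by (cases y) auto
  have S: "?S \<subseteq> U ` {q + 2..q + r}"
  proof
    fix y assume "y \<in> ?S"
    moreover obtain a where "y = U a" using U_part \<open>y \<in> ?S\<close> by blast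
    ultimately show "y \<in> U ` {q + 2..q + r}"
      using U_outside_closed_nbhd_B_isolator[OF assms] by (auto simp: q_def r_def)
  qed
  obtain y where "y \<in> ?S" using False by blast
  moreover obtain a where "y = U a" using U_part \<open>y \<in> ?S\<close> by blast
  ultimately have "U a \<in> ?S" by simp
  then have "r \<le> k + 1" using U_outside_closed_nbhd_B_isolator[OF assms] by (simp add: r_def)
  have "card ?S \<le> card (U ` {q + 2..q + r})" using S by (rule card_mono[rotated]) simp
  also have "\<dots> \<le> card {q + 2..q + r}" by (rule card_image_le) simp
  finally show ?thesis using \<open>r \<le> k + 1\<close> by simp
qed

lemma card_copy_part_outside_closed_nbhd_B_isolator:
  assumes "2 \<le> k"
  shows "card {y \<in> B_V n k - closed_nbhd (B'_E n k) (B_isolator n k). part y = Some i} \<le> k"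
    (is "card ?S \<le> k")
proof -
  define T where "T = {1..2 * k + 2} - insert 1 (closed_nbhd (Ck_edges k) {k + 2})"
  have W_part: "\<exists>x. y = W i x" if "part y = Some i" for y using that by (cases y) auto
  have "?S \<subseteq> W i ` T"
    using W_outside_closed_nbhd_B_isolator W_part unfolding T_def by blast
  then have "card ?S \<le> card (W i ` T)" by (rule card_mono[rotated]) (simp add: T_def)
  also have "\<dots> \<le> card T" by (rule card_image_le) (simp add: T_def)
  also have "\<dots> \<le> k" unfolding T_def using assms by (rule card_Ck_outside_antipodal_nbhd)
  finally show ?thesis .
qed

lemma isolating_B_isolator:
  assumes "2 \<le> k" "2 * k + 3 \<le> n"
  shows "isolating (B_V n k) (B'_E n k) (B_isolator n k) (k + 1)"
proof -
  define Rem where "Rem = B_V n k - closed_nbhd (B'_E n k) (B_isolator n k)"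
  have "\<not> has_cycle Rem (B'_E n k) (k + 1)"
  proof (rule not_has_cycle_if_small_classes[where c = part])
    show "finite Rem" using finite_B_V by (simp add: Rem_def)
  next
    have "U ` {1..n div (2 * k + 3)} \<inter> Rem = {}"
      by (auto simp: Rem_def B_isolator_def Let_def closed_nbhd_def)
    then show "part x = part y" if "x \<in> Rem" "y \<in> Rem" "{x, y} \<in> B'_E n k" for x y
      using that B'_E_part_eq[of x y n k] by auto
  next
    fix x
    show "card {y \<in> Rem. part y = part x} < k + 1"
      using card_U_part_outside_closed_nbhd_B_isolator[OF assms(2)]
        card_copy_part_outside_closed_nbhd_B_isolator[OF assms(1)]
      unfolding Rem_def by (cases "part x") (auto simp: less_Suc_eq_le)
  qed
  then show ?thesis using B_isolator_subset by (simp add: isolating_def Rem_def)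
qed

theorem lemma4:
  fixes k n :: nat
  assumes "4 \<le> k" and "2*k+3 \<le> n"
  shows "iota (B_V n k) (B'_E n k) (k+1) = (2*n) div (2*k+3)"
proof -
  have "iota (B_V n k) (B'_E n k) (k + 1) =
      2 * (n div (2 * k + 3)) + (if k + 2 \<le> n mod (2 * k + 3) then 1 else 0)"
    using assms by (intro iota_eqI[OF finite_B_V card_isolating_lower_bound isolating_B_isolator
          card_B_isolator]) simp_all
  also have "\<dots> = (2 * n) div (2 * k + 3)"
    using two_mult_div_eq[of "2 * k + 3" n] by simp
  finally show ?thesis .
qed

end
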